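(* Let $\lambda$ be a partition of $n$ and $1\le i\le n$. Let $T$ be the column superstandard tabloid of shape $\lambda$ with start $i$ and $T'$ the column superstandard tabloid of shape $\lambda$ with start $i+1$. Then $\operatorname{charge}(T')\equiv\operatorname{charge}(T)-1\pmod{d_\lambda}$.
   Context: Fix $n\ge1$; $\overline i=i+n\mathbb Z$, $[\overline n]=\{\overline1,\dots,\overline n\}$. A tabloid of shape $\lambda$ is a sequence $(T_1,\dots,T_{\ell(\lambda)})$ of pairwise disjoint subsets of $[\overline n]$ with $|T_r|=\lambda_r$ and union $[\overline n]$ (row 1 highest). The column superstandard tabloid of shape $\lambda$ with start $i$ is obtained by filling the columns of the Young diagram of $\lambda$, left to right and each from top to bottom, with consecutive entries $\overline i,\overline{i+1},\overline{i+2},\dots$, then taking $T_r$ to be the set of entries in row $r$. Broken order: $\overline1<\dots<\overline n$. Local charge: if $\lambda_k=\lambda_{k+1}=m$, list $T_k$ as $\overline{a_1}<\dots<\overline{a_m}$ (broken order); for $t=1,\dots,m$ in turn match $\overline{a_t}$ with the smallest unmatched element of $T_{k+1}$ larger than $\overline{a_t}$ if one exists, otherwise with the smallest unmatched element of $T_{k+1}$; $\operatorname{lch}_k(T)$ is the number of $t$ with $\overline{a_t}$ larger than its match. If $\lambda_k\ne\lambda_{k+1}$, $\operatorname{lch}_k(T)=0$. $\operatorname{charge}(T)=\sum_{k=1}^{\ell(\lambda)-1}k\cdot\operatorname{lch}_k(T)$. $d_\lambda=\gcd(\lambda'_1,\lambda'_2,\dots)$ with $\lambda'$ the conjugate partition.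 *)

theory Defs
  imports "HOL-Number_Theory.Cong"
begin

text \<open>Residues modulo n are represented by their representatives 1..n;
  the broken order on [n] is then the usual order on nat.
  A tabloid is a list of sets (row 1 = index 0).\<close>

definition is_partition :: "nat list \<Rightarrow> nat \<Rightarrow> bool" where
  "is_partition lam n \<longleftrightarrow> sorted (rev lam) \<and> (\<forall>x\<in>set lam. 0 < x) \<and> sum_list lam = n"

text \<open>Conjugate partition: lambda'_(j+1) = number of rows of length > j.\<close>
definition conj_part :: "nat list \<Rightarrow> nat \<Rightarrow> nat" where
  "conj_part lam j = card {r. r < length lam \<and> j < lam ! r}"

definition d_lambda :: "nat list \<Rightarrow> nat" where
  "d_lambda lam = Gcd {conj_part lam j | j. j < hd lam}"

text \<open>Column superstandard tabloid of shape lam with start i (residues mod n):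
  cell (r,c) (0-indexed) is the pos-th cell in column reading order,
  pos = (cells in columns < c) + r, and receives residue of i + pos.\<close>
definition css_entry :: "nat list \<Rightarrow> nat \<Rightarrow> nat \<Rightarrow> nat \<Rightarrow> nat \<Rightarrow> nat" where
  "css_entry lam n i r c = ((i + (\<Sum>j<c. conj_part lam j) + r + n - 1) mod n) + 1"

definition col_superstandard :: "nat list \<Rightarrow> nat \<Rightarrow> nat \<Rightarrow> nat set list" where
  "col_superstandard lam n i = map (\<lambda>r. {css_entry lam n i r c | c. c < lam ! r}) [0..<length lam]"

text \<open>Matching procedure for local charge: process a_1<...<a_m in order,
  U = unmatched elements of T_(k+1).\<close>
fun lch_aux :: "nat list \<Rightarrow> nat set \<Rightarrow> nat" where
  "lch_aux [] U = 0"
| "lch_aux (a # as) U =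
     (let b = (if {x \<in> U. a < x} \<noteq> {} then Min {x \<in> U. a < x} else Min U)
      in (if b < a then 1 else 0) + lch_aux as (U - {b}))"

text \<open>Local charge lch_k for 1 \<le> k < length lam (rows k, k+1 are list indices k-1, k).\<close>
definition lch :: "nat list \<Rightarrow> nat set list \<Rightarrow> nat \<Rightarrow> nat" where
  "lch lam T k = (if lam ! (k - 1) = lam ! k
                  then lch_aux (sorted_list_of_set (T ! (k - 1))) (T ! k) else 0)"

definition charge :: "nat list \<Rightarrow> nat set list \<Rightarrow> nat" where
  "charge lam T = (\<Sum>k = 1..<length lam. k * lch lam T k)"

end

theory Submission
  imports Defs
begin

text \<open>In the column superstandard tabloid, each row of length equal to the row above it consists
  of the cyclic successors of the entries above. In the local-charge matching every entry
  \<open>a < n\<close> is then matched with \<open>a + 1\<close> and only \<open>n\<close> wraps around, so \<open>lch\<^sub>k = 1\<close> exactly when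
  row \<open>k\<close> contains \<open>n\<close> and has the same length as row \<open>k + 1\<close>. If \<open>n\<close> sits in row \<open>r + 1\<close> and
  column \<open>c + 1\<close>, the charge is therefore \<open>r + 1\<close> or \<open>0\<close>; in the second case \<open>r + 1\<close> is a column
  length, so in either case it is \<open>r + 1 \<equiv> n + 1 - i\<close> modulo \<open>d\<^sub>\<lambda>\<close>, because \<open>n - i\<close> equals
  \<open>r\<close> plus the sum of the first \<open>c\<close> column lengths. Shifting the start from \<open>i\<close> to \<open>i + 1\<close>
  lowers this by one, and start \<open>n + 1\<close> is start \<open>1\<close>, where \<open>d\<^sub>\<lambda>\<close> divides \<open>n\<close>.\<close>

subsection \<open>Local charge of a row and its cyclic successor\<close>

definition cyclic_succ :: "nat \<Rightarrow> nat \<Rightarrow> nat" where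
  "cyclic_succ n x = x mod n + 1"

lemma inj_on_cyclic_succ: "inj_on (cyclic_succ n) {1..n}"
proof (rule inj_onI)
  fix x y assume "x \<in> {1..n}" "y \<in> {1..n}" "cyclic_succ n x = cyclic_succ n y"
  then show "x = y" unfolding cyclic_succ_def by (cases "x = n"; cases "y = n") auto
qed

lemma lch_aux_cyclic_succ:
  assumes "sorted xs" "distinct xs" "set xs \<subseteq> {1..n}"
  shows "lch_aux xs (cyclic_succ n ` set xs) = (if n \<in> set xs \<and> 1 < n then 1 else 0)"
  using assms
proof (induction xs)
  case Nil
  then show ?case by simp
next
  case (Cons a as)
  have a_less: "\<forall>y\<in>set as. a < y" using Cons.prems by (auto simp: less_le)
  show ?case
  proof (cases "a = n")
    case True
    then have "as = []" using a_less Cons.prems(3) by (cases as) auto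
    then show ?thesis using True Cons.prems by (auto simp: cyclic_succ_def Let_def)
  next
    case False
    let ?U = "cyclic_succ n ` set (a # as)"
    have succ_a: "cyclic_succ n a = a + 1" using False Cons.prems(3) by (simp add: cyclic_succ_def)
    then have mem: "a + 1 \<in> {x \<in> ?U. a < x}" by (auto intro: image_eqI[where x = a])
    have min: "Min {x \<in> ?U. a < x} = a + 1"
      by (rule Min_eqI) (use mem in auto)
    have "cyclic_succ n a \<notin> cyclic_succ n ` set as"
      using Cons.prems(2,3) by (subst inj_on_image_mem_iff[OF inj_on_cyclic_succ]) auto
    then have rest: "?U - {a + 1} = cyclic_succ n ` set as" using succ_a by auto
    have "lch_aux (a # as) ?U = lch_aux as (cyclic_succ n ` set as)"
      using mem min rest by (auto simp: Let_def)
    also have "\<dots> = (if n \<in> set as \<and> 1 < n then 1 else 0)"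
      using Cons.prems by (intro Cons.IH) auto
    finally show ?thesis using False by simp
  qed
qed

subsection \<open>Partitions and their conjugates\<close>

lemma partition_nth_antimono:
  assumes "is_partition lam n" "r \<le> r'" "r' < length lam"
  shows "lam ! r' \<le> lam ! r"
  using assms sorted_rev_nth_mono unfolding is_partition_def by blast

lemma partition_nth_le_hd:
  assumes "is_partition lam n" "r < length lam"
  shows "lam ! r \<le> hd lam"
  using partition_nth_antimono[OF assms(1), of 0 r] assms(2) by (cases lam) auto

lemma down_closed_eq_lessThan:
  fixes S :: "nat set"
  assumes "finite S" "\<And>x y. y \<in> S \<Longrightarrow> x \<le> y \<Longrightarrow> x \<in> S"
  shows "S = {..<card S}"
proof (cases "S = {}")
  case False
  define m where "m = Max S"
  have "m \<in> S" using False assms(1) m_def by simp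
  have "S = {..m}"
  proof
    show "S \<subseteq> {..m}" using assms(1) m_def by auto
    show "{..m} \<subseteq> S" using assms(2) \<open>m \<in> S\<close> by auto
  qed
  then show ?thesis by auto
qed simp

lemma less_conj_part_iff:
  assumes "is_partition lam n"
  shows "r < conj_part lam c \<longleftrightarrow> r < length lam \<and> c < lam ! r"
proof -
  let ?S = "{r. r < length lam \<and> c < lam ! r}"
  have "?S = {..<card ?S}"
  proof (rule down_closed_eq_lessThan)
    fix x y assume "y \<in> ?S" "x \<le> y"
    then show "x \<in> ?S" using partition_nth_antimono[OF assms, of x y] by auto
  qed simp
  have "r < conj_part lam c \<longleftrightarrow> r \<in> {..<card ?S}" unfolding conj_part_def by simp
  also have "\<dots> \<longleftrightarrow> r \<in> ?S" by (simp only: \<open>?S = {..<card ?S}\<close>[symmetric])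
  finally show ?thesis by simp
qed

lemma conj_part_0:
  assumes "is_partition lam n"
  shows "conj_part lam 0 = length lam"
proof -
  have "{r. r < length lam \<and> 0 < lam ! r} = {..<length lam}"
    using assms unfolding is_partition_def by (auto dest: nth_mem)
  then show ?thesis unfolding conj_part_def by simp
qed

lemma conj_part_at_descent:
  assumes "is_partition lam n" "k < length lam" "lam ! k < lam ! (k - 1)"
  shows "conj_part lam (lam ! k) = k"
proof -
  have "r < conj_part lam (lam ! k) \<longleftrightarrow> r < k" for r
  proof
    assume "r < conj_part lam (lam ! k)"
    then have "r < length lam" "lam ! k < lam ! r" using less_conj_part_iff[OF assms(1)] by auto
    then show "r < k" using partition_nth_antimono[OF assms(1), of k r] by linarith
  next
    assume "r < k"
    then have "lam ! (k - 1) \<le> lam ! r" using partition_nth_antimono[OF assms(1), of r "k - 1"] assms(2)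
      by simp
    then show "r < conj_part lam (lam ! k)" using less_conj_part_iff[OF assms(1)] assms \<open>r < k\<close> by simp
  qed
  then show ?thesis by (metis nat_neq_iff less_irrefl)
qed

lemma Suc_row_is_conj_part:
  assumes "is_partition lam n" "r < length lam"
    and "\<not> (Suc r < length lam \<and> lam ! r = lam ! Suc r)"
  shows "\<exists>j < hd lam. conj_part lam j = Suc r"
proof (cases "Suc r < length lam")
  case True
  then have "lam ! Suc r < lam ! r"
    using assms(3) partition_nth_antimono[OF assms(1), of r "Suc r"] by simp
  then show ?thesis
    using conj_part_at_descent[OF assms(1) True] partition_nth_le_hd[OF assms(1,2)] by force
next
  case False
  then have "Suc r = conj_part lam 0" using conj_part_0[OF assms(1)] assms(2) by simp
  moreover have "0 < hd lam"
    using assms(1,2) unfolding is_partition_def by (cases lam) auto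
  ultimately show ?thesis by (metis)
qed

definition col_offset :: "nat list \<Rightarrow> nat \<Rightarrow> nat" where
  "col_offset lam c = (\<Sum>j<c. conj_part lam j)"

lemma col_offset_Suc: "col_offset lam (Suc c) = col_offset lam c + conj_part lam c"
  unfolding col_offset_def by simp

lemma col_offset_mono: "c \<le> c' \<Longrightarrow> col_offset lam c \<le> col_offset lam c'"
  unfolding col_offset_def by (rule sum_mono2) auto

lemma col_offset_hd:
  assumes "is_partition lam n"
  shows "col_offset lam (hd lam) = n"
proof -
  define cells where "cells = Sigma {..<length lam} (\<lambda>r. {..<lam ! r})"
  have "n = (\<Sum>r<length lam. lam ! r)"
    using assms unfolding is_partition_def by (simp add: sum_list_sum_nth atLeast0LessThan)
  also have "\<dots> = card cells" unfolding cells_def by simp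
  also have "cells = (\<lambda>(c, r). (r, c)) ` Sigma {..<hd lam} (\<lambda>c. {..<conj_part lam c})"
    unfolding cells_def using less_conj_part_iff[OF assms] partition_nth_le_hd[OF assms]
    by (auto simp: image_iff) (metis order_less_le_trans)
  also have "card \<dots> = card (Sigma {..<hd lam} (\<lambda>c. {..<conj_part lam c}))"
    by (rule card_image) (auto simp: inj_on_def)
  also have "\<dots> = col_offset lam (hd lam)" by (simp add: col_offset_def)
  finally show ?thesis by simp
qed

lemma col_offset_cell_exists:
  "q < col_offset lam m \<Longrightarrow> \<exists>c<m. col_offset lam c \<le> q \<and> q < col_offset lam (Suc c)"
proof (induction m)
  case (Suc m)
  then show ?case by (cases "q < col_offset lam m") (auto intro: less_SucI)
qed (simp add: col_offset_def)

lemma col_offset_cell_unique: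
  assumes "r < conj_part lam c" "r' < conj_part lam c'"
    and "col_offset lam c + r = col_offset lam c' + r'"
  shows "c = c' \<and> r = r'"
proof -
  have "\<not> c < c'" if "r < conj_part lam c" "col_offset lam c + r = col_offset lam c' + r'"
    for c c' r r'
  proof
    assume "c < c'"
    then have "col_offset lam (Suc c) \<le> col_offset lam c'" by (intro col_offset_mono) simp
    then show False using that col_offset_Suc[of lam c] by simp
  qed
  then have "c = c'" using assms by (metis nat_neq_iff)
  then show ?thesis using assms by simp
qed

lemma d_lambda_dvd_conj_part: "j < hd lam \<Longrightarrow> d_lambda lam dvd conj_part lam j"
  unfolding d_lambda_def by (rule Gcd_dvd) auto

lemma d_lambda_dvd_col_offset: "c \<le> hd lam \<Longrightarrow> d_lambda lam dvd col_offset lam c"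
  unfolding col_offset_def by (rule dvd_sum) (use d_lambda_dvd_conj_part in auto)

lemma d_lambda_dvd: "is_partition lam n \<Longrightarrow> d_lambda lam dvd n"
  using d_lambda_dvd_col_offset[of "hd lam" lam] col_offset_hd by auto

subsection \<open>Column superstandard tabloids\<close>

lemma css_entry_col_offset: "css_entry lam n i r c = (i + col_offset lam c + r + n - 1) mod n + 1"
  unfolding css_entry_def col_offset_def by simp

lemma nth_col_superstandard:
  "r < length lam \<Longrightarrow> col_superstandard lam n i ! r = {css_entry lam n i r c | c. c < lam ! r}"
  unfolding col_superstandard_def by simp

lemma col_superstandard_add_n:
  assumes "1 \<le> n"
  shows "col_superstandard lam n (i + n) = col_superstandard lam n i"
proof -
  have "css_entry lam n (i + n) r c = css_entry lam n i r c" for r c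
  proof -
    have "i + n + col_offset lam c + r + n - 1 = (i + col_offset lam c + r + n - 1) + n"
      using assms by simp
    then show ?thesis unfolding css_entry_col_offset by (simp only: mod_add_self2)
  qed
  then show ?thesis unfolding col_superstandard_def by simp
qed

lemma css_entry_Suc_row:
  assumes "1 \<le> n"
  shows "css_entry lam n i (Suc r) c = cyclic_succ n (css_entry lam n i r c)"
proof -
  have "i + col_offset lam c + Suc r + n - 1 = Suc (i + col_offset lam c + r + n - 1)"
    using assms by simp
  then show ?thesis unfolding css_entry_col_offset cyclic_succ_def by (simp add: mod_Suc_eq)
qed

lemma lch_col_superstandard:
  assumes "1 \<le> n" "1 \<le> k" "k < length lam"
  shows "lch lam (col_superstandard lam n i) k =
    (if lam ! (k - 1) = lam ! k \<and> n \<in> col_superstandard lam n i ! (k - 1) \<and> 1 < n then 1 else 0)"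
proof (cases "lam ! (k - 1) = lam ! k")
  case True
  define S where "S = col_superstandard lam n i ! (k - 1)"
  have S: "S = {css_entry lam n i (k - 1) c | c. c < lam ! (k - 1)}"
    unfolding S_def using assms by (simp add: nth_col_superstandard)
  have fin: "finite S" unfolding S by simp
  have "S \<subseteq> {1..n}" unfolding S css_entry_def using assms(1) by (auto simp: Suc_le_eq)
  have next_row: "col_superstandard lam n i ! k = cyclic_succ n ` S"
  proof -
    have "col_superstandard lam n i ! k
        = {css_entry lam n i (Suc (k - 1)) c | c. c < lam ! (k - 1)}"
      using assms True by (simp add: nth_col_superstandard)
    also have "\<dots> = cyclic_succ n ` S" unfolding S css_entry_Suc_row[OF assms(1)] by blast
    finally show ?thesis .
  qed
  have "lch lam (col_superstandard lam n i) k
      = lch_aux (sorted_list_of_set S) (cyclic_succ n ` set (sorted_list_of_set S))"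
    unfolding lch_def using True next_row S_def fin by simp
  also have "\<dots> = (if n \<in> S \<and> 1 < n then 1 else 0)"
    using lch_aux_cyclic_succ[of "sorted_list_of_set S" n] fin \<open>S \<subseteq> {1..n}\<close> by simp
  finally show ?thesis using True S_def by simp
qed (simp add: lch_def)

lemma css_entry_eq_n_iff:
  fixes x n i :: nat
  assumes "x < n" "1 \<le> i" "i \<le> n"
  shows "(i + x + n - 1) mod n + 1 = n \<longleftrightarrow> x = n - i"
proof -
  have "(i + x + n - 1) mod n = (i + x - 1) mod n"
    using assms(2) by (metis add.commute add_diff_assoc2 le_add2 le_trans mod_add_self1)
  moreover have "(i + x - 1) mod n = (if i + x - 1 < n then i + x - 1 else i + x - 1 - n)"
    using assms by (simp add: le_mod_geq)
  ultimately show ?thesis using assms by auto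
qed

lemma n_mem_col_superstandard_iff:
  assumes "is_partition lam n" "1 \<le> i" "i \<le> n" "r < length lam"
  shows "n \<in> col_superstandard lam n i ! r \<longleftrightarrow> (\<exists>c<lam ! r. col_offset lam c + r = n - i)"
proof -
  have "n \<in> col_superstandard lam n i ! r \<longleftrightarrow> (\<exists>c<lam ! r. css_entry lam n i r c = n)"
    using assms(4) by (auto simp: nth_col_superstandard) metis
  also have "\<dots> \<longleftrightarrow> (\<exists>c<lam ! r. col_offset lam c + r = n - i)"
  proof (intro ex_cong1 conj_cong refl)
    fix c assume "c < lam ! r"
    then have "r < conj_part lam c" "c < hd lam"
      using less_conj_part_iff[OF assms(1)] partition_nth_le_hd[OF assms(1,4)] assms(4) by auto
    then have "col_offset lam (Suc c) \<le> n"
      using col_offset_mono[of "Suc c" "hd lam" lam] col_offset_hd[OF assms(1)] by simp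
    then have "col_offset lam c + r < n" using \<open>r < conj_part lam c\<close> col_offset_Suc[of lam c] by simp
    then show "css_entry lam n i r c = n \<longleftrightarrow> col_offset lam c + r = n - i"
      unfolding css_entry_col_offset using css_entry_eq_n_iff[of "col_offset lam c + r" n i] assms
      by (simp add: add.assoc)
  qed
  finally show ?thesis .
qed

lemma charge_col_superstandard:
  assumes "1 < n" "r0 < length lam"
    and row_of_n: "\<And>r. r < length lam \<Longrightarrow> n \<in> col_superstandard lam n i ! r \<longleftrightarrow> r = r0"
  shows "charge lam (col_superstandard lam n i)
    = (if Suc r0 < length lam \<and> lam ! r0 = lam ! Suc r0 then Suc r0 else 0)"
proof -
  let ?T = "col_superstandard lam n i"
  have "k * lch lam ?T k = (if k = Suc r0 \<and> lam ! r0 = lam ! Suc r0 then Suc r0 else 0)"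
    if "k \<in> {1..<length lam}" for k
    using that assms(1) row_of_n[of "k - 1"] lch_col_superstandard[of n k lam i] by auto
  then have "charge lam ?T
      = (\<Sum>k = 1..<length lam. if k = Suc r0 \<and> lam ! r0 = lam ! Suc r0 then Suc r0 else 0)"
    unfolding charge_def by (rule sum.cong[OF refl])
  then show ?thesis by simp
qed

lemma row_of_n_col_superstandard:
  assumes P: "is_partition lam n" and "1 \<le> i" "i \<le> n"
  obtains c0 r0 where "c0 < hd lam" "r0 < length lam" "col_offset lam c0 + r0 = n - i"
    "\<And>r. r < length lam \<Longrightarrow> n \<in> col_superstandard lam n i ! r \<longleftrightarrow> r = r0"
proof -
  have "n - i < col_offset lam (hd lam)" using assms col_offset_hd[OF P] by simp
  then obtain c0 where c0: "c0 < hd lam" "col_offset lam c0 \<le> n - i"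
    "n - i < col_offset lam (Suc c0)"
    using col_offset_cell_exists by blast
  define r0 where "r0 = n - i - col_offset lam c0"
  have r0_c0: "r0 < conj_part lam c0" using c0 col_offset_Suc[of lam c0] unfolding r0_def by simp
  then have r0: "r0 < length lam" "c0 < lam ! r0" using less_conj_part_iff[OF P] by auto
  have pos: "col_offset lam c0 + r0 = n - i" using c0 unfolding r0_def by simp
  have "n \<in> col_superstandard lam n i ! r \<longleftrightarrow> r = r0" if "r < length lam" for r
    unfolding n_mem_col_superstandard_iff[OF P assms(2,3) that]
    using col_offset_cell_unique[OF _ r0_c0] pos r0 less_conj_part_iff[OF P] that by metis
  then show ?thesis using that c0(1) r0(1) pos by blast
qed

lemma charge_col_superstandard_cong:
  assumes P: "is_partition lam n" and "1 \<le> i" "i \<le> n"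
  shows "[int (charge lam (col_superstandard lam n i)) = int n + 1 - int i] (mod int (d_lambda lam))"
proof (cases "n = 1")
  case True
  then show ?thesis using d_lambda_dvd[OF P] by simp
next
  case False
  then have "1 < n" using assms by simp
  obtain c0 r0 where c0: "c0 < hd lam" and r0: "r0 < length lam"
    and pos: "col_offset lam c0 + r0 = n - i"
    and row_of_n: "\<And>r. r < length lam \<Longrightarrow> n \<in> col_superstandard lam n i ! r \<longleftrightarrow> r = r0"
    using row_of_n_col_superstandard[OF assms] by blast
  have "int (Suc r0) - (int n + 1 - int i) = - int (col_offset lam c0)" using pos assms(3) by linarith
  moreover have "d_lambda lam dvd col_offset lam c0" using d_lambda_dvd_col_offset c0 by simp
  ultimately have "[int (Suc r0) = int n + 1 - int i] (mod int (d_lambda lam))"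
    unfolding cong_iff_dvd_diff by simp
  moreover have "[int (charge lam (col_superstandard lam n i)) = int (Suc r0)] (mod int (d_lambda lam))"
  proof (cases "Suc r0 < length lam \<and> lam ! r0 = lam ! Suc r0")
    case True
    then show ?thesis using charge_col_superstandard[OF \<open>1 < n\<close> r0 row_of_n] by simp
  next
    case False
    then have "d_lambda lam dvd Suc r0"
      using Suc_row_is_conj_part[OF P r0] d_lambda_dvd_conj_part by metis
    then have "[int (Suc r0) = 0] (mod int (d_lambda lam))" by (simp only: cong_0_iff int_dvd_int_iff)
    then show ?thesis using charge_col_superstandard[OF \<open>1 < n\<close> r0 row_of_n] False
      by (simp add: cong_sym_eq)
  qed
  ultimately show ?thesis using cong_trans by blast
qed

theorem lemma8p5:
  fixes lam :: "nat list" and n i :: nat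
  assumes "n \<ge> 1" and "is_partition lam n" and "1 \<le> i" and "i \<le> n"
  shows "[int (charge lam (col_superstandard lam n (i + 1)))
            = int (charge lam (col_superstandard lam n i)) - 1] (mod int (d_lambda lam))"
proof -
  let ?d = "int (d_lambda lam)" and ?c = "\<lambda>j. int (charge lam (col_superstandard lam n j))"
  have "[?c i - 1 = int n - int i] (mod ?d)"
    using cong_diff[OF charge_col_superstandard_cong[OF assms(2-4)] cong_refl, of 1] by simp
  moreover have "[?c (i + 1) = int n - int i] (mod ?d)"
  proof (cases "i < n")
    case True
    then show ?thesis using charge_col_superstandard_cong[OF assms(2), of "i + 1"] by simp
  next
    case False
    then have "?c (i + 1) = ?c 1" using col_superstandard_add_n[OF assms(1), of lam 1] assms(4)
      by simp
    moreover have "[?c 1 = int n] (mod ?d)"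
      using charge_col_superstandard_cong[OF assms(2), of 1] assms(1) by simp
    moreover have "[int n = 0] (mod ?d)" using d_lambda_dvd[OF assms(2)] by (simp add: cong_0_iff)
    ultimately show ?thesis using False assms(4) by (metis cong_trans diff_self le_antisym not_less)
  qed
  ultimately show ?thesis by (metis cong_sym cong_trans)
qed

end
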